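(* Consider the Bak–Sneppen model on a finite connected simple graph $G$ with parameter $p\in(0,1)$, realized via the graphical construction, and fix $L>0$, $k\in\mathbb Z_+$ and adjacent vertices $x\sim y$. If the level-$k$ block $\{x,y\}\times((k-1)L,kL]$ is nice and at least one of $\eta_x((k-1)L)$, $\eta_y((k-1)L)$ equals $0$, then $\eta_x(kL)=\eta_y(kL)=0$.
   Context: Let $G=(V,E)$ be a finite connected simple graph and $p\in(0,1)$. Graphical construction of the Bak–Sneppen model: each vertex $x$ carries an independent rate-$1$ Poisson clock; each ring of the clock at $x$ carries a mark, namely a family of independent Bernoulli$(p)$ values, one for each vertex of the neighbourhood $\{x\}\cup\{y:y\sim x\}$ (marks independent across rings). When the clock at $x$ rings at a time when $\eta_x=0$, or when $\eta_y=1$ for all $y\in V$, the values $\eta_z$ on the neighbourhood of $x$ are set equal to the mark values; otherwise (the ring is "muted") nothing happens. For $x\in V$ and $k\in\mathbb Z_+$, the level-$k$ $x$-stick is $\{x\}\times((k-1)L,kL]$. For $A\subseteq\{x\}\cup\{y:y\sim x\}$, the $x$-stick is $A$-good if every clock ring at $x$ during $((k-1)L,kL]$ has mark value $0$ at every vertex of $A$ (a stick with no rings is good). For $x\sim y$, the level-$k$ block $\{x,y\}\times((k-1)L,kL]$ is nice if: (a) the clocks at $x$ and at $y$ each ring at least once during $((k-1)L,kL]$; (b) both the $x$-stick and the $y$-stick are $\{x,y\}$-good; (c) for every $v\sim x$ the $v$-stick is $\{x\}$-good and for every $w\sim y$ the $w$-stick is $\{y\}$-good, and if $v$ is adjacent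 to both $x$ and $y$ then the $v$-stick is $\{x,y\}$-good (all sticks at level $k$). *)

theory Defs
  imports Main "HOL.Real"
begin

definition simple_graph :: "'a set \<Rightarrow> ('a \<Rightarrow> 'a \<Rightarrow> bool) \<Rightarrow> bool" where
  "simple_graph V E \<longleftrightarrow> finite V \<and> V \<noteq> {} \<and>
     (\<forall>u v. E u v \<longrightarrow> u \<in> V \<and> v \<in> V) \<and>
     (\<forall>u v. E u v \<longrightarrow> E v u) \<and> (\<forall>u. \<not> E u u)"

definition connected_graph :: "'a set \<Rightarrow> ('a \<Rightarrow> 'a \<Rightarrow> bool) \<Rightarrow> bool" where
  "connected_graph V E \<longleftrightarrow> (\<forall>u\<in>V. \<forall>v\<in>V. E\<^sup>*\<^sup>* u v)"

definition nbhd :: "('a \<Rightarrow> 'a \<Rightarrow> bool) \<Rightarrow> 'a \<Rightarrow> 'a set" where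
  "nbhd E x = insert x {y. E y x}"

text \<open>A realisation of the graphical construction: R x is the set of ring times of the
  clock at x; mk x t z is the mark value at vertex z attached to the ring of x at time t;
  eta t z is the configuration at time t.\<close>

definition BS_step :: "'a set \<Rightarrow> ('a \<Rightarrow> 'a \<Rightarrow> bool) \<Rightarrow> 'a \<Rightarrow> ('a \<Rightarrow> nat) \<Rightarrow> ('a \<Rightarrow> nat) \<Rightarrow> ('a \<Rightarrow> nat)" where
  "BS_step V E x mark \<zeta> =
     (if \<zeta> x = 0 \<or> (\<forall>y\<in>V. \<zeta> y = 1)
      then (\<lambda>z. if z \<in> nbhd E x then mark z else \<zeta> z)
      else \<zeta>)"

text \<open>Almost-sure properties of the Poisson clocks and the marks: ring times are positive,
  locally finite, and distinct clocks never ring simultaneously; marks are 0/1.\<close>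
definition clocks_ok :: "'a set \<Rightarrow> ('a \<Rightarrow> 'a \<Rightarrow> bool) \<Rightarrow> ('a \<Rightarrow> real set) \<Rightarrow> ('a \<Rightarrow> real \<Rightarrow> 'a \<Rightarrow> nat) \<Rightarrow> bool" where
  "clocks_ok V E R mk \<longleftrightarrow>
     (\<forall>x\<in>V. R x \<subseteq> {0<..} \<and> (\<forall>T. finite (R x \<inter> {..T}))) \<and>
     (\<forall>x\<in>V. \<forall>y\<in>V. x \<noteq> y \<longrightarrow> R x \<inter> R y = {}) \<and>
     (\<forall>x\<in>V. \<forall>t\<in>R x. \<forall>z\<in>nbhd E x. mk x t z \<in> {0,1})"

definition BS_evolution :: "'a set \<Rightarrow> ('a \<Rightarrow> 'a \<Rightarrow> bool) \<Rightarrow> ('a \<Rightarrow> real set) \<Rightarrow> ('a \<Rightarrow> real \<Rightarrow> 'a \<Rightarrow> nat) \<Rightarrow> (real \<Rightarrow> 'a \<Rightarrow> nat) \<Rightarrow> bool" where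
  "BS_evolution V E R mk \<eta> \<longleftrightarrow>
     (\<forall>z\<in>V. \<eta> 0 z \<in> {0,1}) \<and>
     (\<forall>s t. 0 \<le> s \<and> s \<le> t \<and> (\<forall>x\<in>V. R x \<inter> {s<..t} = {}) \<longrightarrow> \<eta> t = \<eta> s) \<and>
     (\<forall>x\<in>V. \<forall>t\<in>R x. \<exists>s. 0 \<le> s \<and> s < t \<and> (\<forall>y\<in>V. R y \<inter> {s..<t} = {}) \<and>
                          \<eta> t = BS_step V E x (mk x t) (\<eta> s))"

definition stick_good :: "('a \<Rightarrow> real set) \<Rightarrow> ('a \<Rightarrow> real \<Rightarrow> 'a \<Rightarrow> nat) \<Rightarrow> real \<Rightarrow> nat \<Rightarrow> 'a \<Rightarrow> 'a set \<Rightarrow> bool" where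
  "stick_good R mk L k x A \<longleftrightarrow>
     (\<forall>t \<in> R x \<inter> {(real k - 1) * L <.. real k * L}. \<forall>a\<in>A. mk x t a = 0)"

definition block_nice :: "('a \<Rightarrow> 'a \<Rightarrow> bool) \<Rightarrow> ('a \<Rightarrow> real set) \<Rightarrow> ('a \<Rightarrow> real \<Rightarrow> 'a \<Rightarrow> nat) \<Rightarrow> real \<Rightarrow> nat \<Rightarrow> 'a \<Rightarrow> 'a \<Rightarrow> bool" where
  "block_nice E R mk L k x y \<longleftrightarrow>
     R x \<inter> {(real k - 1) * L <.. real k * L} \<noteq> {} \<and>
     R y \<inter> {(real k - 1) * L <.. real k * L} \<noteq> {} \<and>
     stick_good R mk L k x {x, y} \<and> stick_good R mk L k y {x, y} \<and>
     (\<forall>v. E v x \<longrightarrow> stick_good R mk L k v {x}) \<and>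
     (\<forall>w. E w y \<longrightarrow> stick_good R mk L k w {y}) \<and>
     (\<forall>v. E v x \<and> E v y \<longrightarrow> stick_good R mk L k v {x, y})"

end

theory Submission
  imports Defs
begin

(* At the start of the block one of x, y is 0. Inside a nice block every ring touching x or y
   writes 0 there, so zeros at x and y persist. The first ring of the clock of a vertex holding 0
   is not muted and zeroes both x and y, and by the end of the block both clocks have rung.
   Connectivity and the value of p play no role. *)

lemma real_event_induct:
  fixes T :: "real set" and a t :: real
  assumes finite_T: "\<And>t. finite (T \<inter> {..t})"
    and base: "P a"
    and quiet: "\<And>s t. a \<le> s \<Longrightarrow> s \<le> t \<Longrightarrow> T \<inter> {s<..t} = {} \<Longrightarrow> P s \<Longrightarrow> P t"
    and event: "\<And>m. m \<in> T \<Longrightarrow> a < m \<Longrightarrow> (\<And>s. a \<le> s \<Longrightarrow> s < m \<Longrightarrow> P s) \<Longrightarrow> P m"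
    and "a \<le> t"
  shows "P t"
  using \<open>a \<le> t\<close>
proof (induction "card (T \<inter> {a<..t})" arbitrary: t rule: less_induct)
  case (less t)
  have finite_window: "finite (T \<inter> {a<..r})" for r
    by (rule finite_subset[OF _ finite_T[of r]]) auto
  show "P t"
  proof (cases "T \<inter> {a<..t} = {}")
    case True
    then show ?thesis using quiet[OF order_refl \<open>a \<le> t\<close>] base by blast
  next
    case False
    define m where "m = Max (T \<inter> {a<..t})"
    have m: "m \<in> T" "a < m" "m \<le> t"
      using Max_in[OF finite_window False] by (auto simp: m_def)
    have "r \<le> m" if "r \<in> T \<inter> {a<..t}" for r
      using Max_ge[OF finite_window that] by (simp add: m_def)
    then have "T \<inter> {m<..t} = {}"
      using m(2) by fastforce
    moreover have "P m"
    proof (rule event[OF m(1,2)])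
      fix s assume s: "a \<le> s" "s < m"
      have "T \<inter> {a<..s} \<subseteq> T \<inter> {a<..t}" "m \<in> T \<inter> {a<..t} - T \<inter> {a<..s}"
        using s m by auto
      then have "T \<inter> {a<..s} \<subset> T \<inter> {a<..t}"
        by blast
      then have "card (T \<inter> {a<..s}) < card (T \<inter> {a<..t})"
        by (rule psubset_card_mono[OF finite_window])
      then show "P s" using less.hyps s(1) by blast
    qed
    ultimately show ?thesis
      using m by (intro quiet[of m t]) auto
  qed
qed

lemma clocks_ok_ring_times_finite:
  assumes "clocks_ok V E R mk" "finite V"
  shows "finite ((\<Union>v\<in>V. R v) \<inter> {..t})"
proof -
  have "finite (\<Union>v\<in>V. R v \<inter> {..t})"
    by (rule finite_UN_I[OF assms(2)]) (use assms(1) in \<open>auto simp: clocks_ok_def\<close>)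
  also have "(\<Union>v\<in>V. R v \<inter> {..t}) = (\<Union>v\<in>V. R v) \<inter> {..t}"
    by blast
  finally show ?thesis .
qed

lemma clocks_ok_rung_since:
  assumes "clocks_ok V E R mk" "z \<in> V" "u \<in> V" "m \<in> R u"
    and "a \<le> s" "s < m" "R z \<inter> {s<..<m} = {}"
  shows "R z \<inter> {a<..m} \<noteq> {} \<longleftrightarrow> R z \<inter> {a<..s} \<noteq> {} \<or> z = u"
proof -
  have "m \<in> R z \<longleftrightarrow> z = u"
    using assms(1-4) unfolding clocks_ok_def by blast
  moreover have "R z \<inter> {a<..m} = R z \<inter> {a<..s} \<union> R z \<inter> {m}"
    using assms(5-7) by auto
  ultimately show ?thesis using \<open>m \<in> R u\<close> by auto
qed

lemma BS_evolution_constant: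
  assumes "BS_evolution V E R mk \<eta>" "0 \<le> s" "s \<le> t" "\<forall>v\<in>V. R v \<inter> {s<..t} = {}"
  shows "\<eta> t = \<eta> s"
proof -
  have "\<forall>s t. 0 \<le> s \<and> s \<le> t \<and> (\<forall>x\<in>V. R x \<inter> {s<..t} = {}) \<longrightarrow> \<eta> t = \<eta> s"
    using assms(1) unfolding BS_evolution_def by (rule conjunct1[OF conjunct2])
  then show ?thesis
    using assms(2-4) by blast
qed

lemma BS_evolution_jump:
  assumes "BS_evolution V E R mk \<eta>" "u \<in> V" "m \<in> R u" "0 \<le> a" "a < m"
  obtains s where "a \<le> s" "s < m" "\<forall>v\<in>V. R v \<inter> {s<..<m} = {}"
    "\<eta> m = BS_step V E u (mk u m) (\<eta> s)"
proof -
  obtain s where s: "0 \<le> s" "s < m" "\<forall>v\<in>V. R v \<inter> {s..<m} = {}"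
    and jump: "\<eta> m = BS_step V E u (mk u m) (\<eta> s)"
  proof -
    have "\<forall>x\<in>V. \<forall>t\<in>R x. \<exists>s. 0 \<le> s \<and> s < t \<and> (\<forall>y\<in>V. R y \<inter> {s..<t} = {}) \<and>
        \<eta> t = BS_step V E x (mk x t) (\<eta> s)"
      using assms(1) unfolding BS_evolution_def by (rule conjunct2[OF conjunct2])
    then have "\<exists>s. 0 \<le> s \<and> s < m \<and> (\<forall>v\<in>V. R v \<inter> {s..<m} = {}) \<and>
        \<eta> m = BS_step V E u (mk u m) (\<eta> s)"
      using assms(2,3) by blast
    then show ?thesis
      using that by blast
  qed
  show ?thesis
  proof (rule that[of "max s a"])
    have "R v \<inter> {max s a<..<m} \<subseteq> R v \<inter> {s..<m}" for v
      by auto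
    then show "\<forall>v\<in>V. R v \<inter> {max s a<..<m} = {}"
      using s(3) by blast
    have "\<eta> (max s a) = \<eta> s"
    proof (cases "s < a")
      case True
      have "R v \<inter> {s<..a} \<subseteq> R v \<inter> {s..<m}" for v
        using \<open>a < m\<close> by auto
      then have "\<forall>v\<in>V. R v \<inter> {s<..a} = {}"
        using s(3) by blast
      then show ?thesis
        using BS_evolution_constant[OF assms(1) s(1), of a] True by simp
    qed simp
    then show "\<eta> m = BS_step V E u (mk u m) (\<eta> (max s a))"
      using jump by simp
  qed (use s(2) \<open>a < m\<close> in auto)
qed

lemma BS_step_unmuted:
  assumes "\<zeta> x = 0" "z \<in> nbhd E x"
  shows "BS_step V E x mark \<zeta> z = mark z"
  using assms unfolding BS_step_def by simp

lemma BS_step_keeps_zero: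
  assumes "\<zeta> z = 0" "z \<in> nbhd E x \<Longrightarrow> mark z = 0"
  shows "BS_step V E x mark \<zeta> z = 0"
  using assms unfolding BS_step_def by auto

text \<open>Here rx and ry record whether the clocks of x and y have rung since the start of the
  block: a 0 at a vertex whose clock has not rung yet is as good as two zeros.\<close>
definition pair_zero_inv :: "('a \<Rightarrow> nat) \<Rightarrow> 'a \<Rightarrow> 'a \<Rightarrow> bool \<Rightarrow> bool \<Rightarrow> bool" where
  "pair_zero_inv \<zeta> x y rx ry \<longleftrightarrow>
     (\<zeta> x = 0 \<and> \<zeta> y = 0) \<or> (\<zeta> x = 0 \<and> \<not> rx) \<or> (\<zeta> y = 0 \<and> \<not> ry)"

lemma pair_zero_inv_BS_step:
  assumes inv: "pair_zero_inv \<zeta> x y rx ry"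
    and marks: "\<And>z. z \<in> {x, y} \<Longrightarrow> z \<in> nbhd E u \<Longrightarrow> mark z = 0"
    and "E x y" "E y x"
  shows "pair_zero_inv (BS_step V E u mark \<zeta>) x y (rx \<or> x = u) (ry \<or> y = u)"
proof (cases "u \<in> {x, y} \<and> \<zeta> u = 0")
  case True
  then have "x \<in> nbhd E u" "y \<in> nbhd E u"
    using \<open>E x y\<close> \<open>E y x\<close> unfolding nbhd_def by auto
  then have "BS_step V E u mark \<zeta> x = 0" "BS_step V E u mark \<zeta> y = 0"
    using True marks BS_step_unmuted[of \<zeta> u] by auto
  then show ?thesis
    unfolding pair_zero_inv_def by simp
next
  case False
  have keep: "BS_step V E u mark \<zeta> z = 0" if "z \<in> {x, y}" "\<zeta> z = 0" for z
    by (rule BS_step_keeps_zero) (use that marks in auto)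
  show ?thesis
    using inv False keep[of x] keep[of y] unfolding pair_zero_inv_def by auto
qed

lemma pair_zero_inv_evolution:
  assumes "finite V" "x \<in> V" "y \<in> V" "E x y" "E y x"
    and clocks: "clocks_ok V E R mk" and evol: "BS_evolution V E R mk \<eta>"
    and "0 \<le> a"
    and marks: "\<And>u t z. u \<in> V \<Longrightarrow> t \<in> R u \<Longrightarrow> a < t \<Longrightarrow> t \<le> b \<Longrightarrow> z \<in> {x, y} \<Longrightarrow>
      z \<in> nbhd E u \<Longrightarrow> mk u t z = 0"
    and start: "\<eta> a x = 0 \<or> \<eta> a y = 0"
    and "a \<le> t" "t \<le> b"
  shows "pair_zero_inv (\<eta> t) x y (R x \<inter> {a<..t} \<noteq> {}) (R y \<inter> {a<..t} \<noteq> {})"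
proof -
  define P where "P t \<longleftrightarrow> t \<le> b \<longrightarrow>
    pair_zero_inv (\<eta> t) x y (R x \<inter> {a<..t} \<noteq> {}) (R y \<inter> {a<..t} \<noteq> {})" for t
  have "P t"
  proof (rule real_event_induct[where T = "\<Union>v\<in>V. R v"])
    show "finite ((\<Union>v\<in>V. R v) \<inter> {..t})" for t
      using clocks_ok_ring_times_finite[OF clocks \<open>finite V\<close>] .
    show "P a"
      using start unfolding P_def pair_zero_inv_def by auto
  next
    fix s t assume s: "a \<le> s" "s \<le> t" and quiet: "(\<Union>v\<in>V. R v) \<inter> {s<..t} = {}" and "P s"
    have no_ring: "R v \<inter> {s<..t} = {}" if "v \<in> V" for v
      using quiet that by blast
    have "\<eta> t = \<eta> s"
      by (rule BS_evolution_constant[OF evol _ \<open>s \<le> t\<close>])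
        (use no_ring s \<open>0 \<le> a\<close> in auto)
    moreover have "R z \<inter> {a<..t} = R z \<inter> {a<..s}" if "z \<in> V" for z
      using no_ring[OF that] s by auto
    ultimately show "P t"
      using \<open>P s\<close> \<open>x \<in> V\<close> \<open>y \<in> V\<close> s unfolding P_def by simp
  next
    fix m assume m: "m \<in> (\<Union>v\<in>V. R v)" "a < m" and IH: "\<And>s. a \<le> s \<Longrightarrow> s < m \<Longrightarrow> P s"
    show "P m" unfolding P_def
    proof
      assume "m \<le> b"
      obtain u where u: "u \<in> V" "m \<in> R u" using m(1) by blast
      obtain s where s: "a \<le> s" "s < m" "\<forall>v\<in>V. R v \<inter> {s<..<m} = {}"
        and jump: "\<eta> m = BS_step V E u (mk u m) (\<eta> s)"
        using BS_evolution_jump[OF evol u \<open>0 \<le> a\<close> m(2)] by blast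
      have "pair_zero_inv (\<eta> s) x y (R x \<inter> {a<..s} \<noteq> {}) (R y \<inter> {a<..s} \<noteq> {})"
        using IH[OF s(1,2)] s(2) \<open>m \<le> b\<close> unfolding P_def by simp
      then have "pair_zero_inv (\<eta> m) x y
          (R x \<inter> {a<..s} \<noteq> {} \<or> x = u) (R y \<inter> {a<..s} \<noteq> {} \<or> y = u)"
        unfolding jump
        by (rule pair_zero_inv_BS_step) (use marks u m(2) \<open>m \<le> b\<close> assms(4,5) in auto)
      moreover have "R z \<inter> {a<..m} \<noteq> {} \<longleftrightarrow> R z \<inter> {a<..s} \<noteq> {} \<or> z = u"
        if "z \<in> V" for z
        by (rule clocks_ok_rung_since[OF clocks that u s(1,2)]) (use s(3) that in blast)
      ultimately show "pair_zero_inv (\<eta> m) x y (R x \<inter> {a<..m} \<noteq> {}) (R y \<inter> {a<..m} \<noteq> {})"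
        using \<open>x \<in> V\<close> \<open>y \<in> V\<close> by simp
    qed
  qed fact
  then show ?thesis using \<open>t \<le> b\<close> unfolding P_def by simp
qed

lemma block_nice_mark_zero:
  assumes nice: "block_nice E R mk L k x y" and E_sym: "\<And>v w. E v w \<Longrightarrow> E w v"
    and "t \<in> R u" "(real k - 1) * L < t" "t \<le> real k * L"
    and "z \<in> {x, y}" "z \<in> nbhd E u"
  shows "mk u t z = 0"
proof -
  have "u \<in> {x, y} \<or> E u z"
    using assms(6,7) E_sym unfolding nbhd_def by auto
  then show ?thesis
    using nice assms(3-6) unfolding block_nice_def stick_good_def by auto
qed

theorem proposition1:
  fixes V :: "'a set" and E :: "'a \<Rightarrow> 'a \<Rightarrow> bool"
    and R :: "'a \<Rightarrow> real set" and mk :: "'a \<Rightarrow> real \<Rightarrow> 'a \<Rightarrow> nat"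
    and \<eta> :: "real \<Rightarrow> 'a \<Rightarrow> nat"
    and p L :: real and k :: nat and x y :: 'a
  assumes "simple_graph V E" and "connected_graph V E"
    and "0 < p" and "p < 1"
    and "clocks_ok V E R mk"
    and "BS_evolution V E R mk \<eta>"
    and "0 < L" and "1 \<le> k"
    and "E x y"
    and "block_nice E R mk L k x y"
    and "\<eta> ((real k - 1) * L) x = 0 \<or> \<eta> ((real k - 1) * L) y = 0"
  shows "\<eta> (real k * L) x = 0 \<and> \<eta> (real k * L) y = 0"
proof -
  have "finite V" and E_sym: "\<And>v w. E v w \<Longrightarrow> E w v" and "x \<in> V" "y \<in> V"
    using \<open>simple_graph V E\<close> \<open>E x y\<close> unfolding simple_graph_def by blast+
  have "pair_zero_inv (\<eta> (real k * L)) x y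
      (R x \<inter> {(real k - 1) * L<..real k * L} \<noteq> {}) (R y \<inter> {(real k - 1) * L<..real k * L} \<noteq> {})"
  proof (rule pair_zero_inv_evolution)
    show "mk u t z = 0" if "t \<in> R u" "(real k - 1) * L < t" "t \<le> real k * L"
      "z \<in> {x, y}" "z \<in> nbhd E u" for u t z
      using block_nice_mark_zero[OF \<open>block_nice E R mk L k x y\<close> E_sym that] .
  qed (use assms E_sym \<open>finite V\<close> \<open>x \<in> V\<close> \<open>y \<in> V\<close> in auto)
  moreover have "R x \<inter> {(real k - 1) * L<..real k * L} \<noteq> {}"
    "R y \<inter> {(real k - 1) * L<..real k * L} \<noteq> {}"
    using \<open>block_nice E R mk L k x y\<close> unfolding block_nice_def by auto
  ultimately show ?thesis unfolding pair_zero_inv_def by blast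
qed

end
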